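(* For every positive integer $n\neq 4$, $\mathrm{ex}(n,M_2,P_4)=\mathcal{N}(M_2,D(3,n))$, and $\mathrm{ex}(4,M_2,P_4)=1$.
   Context: $M_2$ is the matching with two edges, $P_4$ the path on $4$ vertices (three edges). $D(k,n)$ is the graph on $n$ vertices consisting of $\lfloor n/k\rfloor$ vertex-disjoint copies of $K_k$ and a clique on the remaining $n-k\lfloor n/k\rfloor$ vertices. For graphs $H,G$, $\mathcal{N}(H,G)$ is the number of subgraphs of $G$ isomorphic to $H$, and $\mathrm{ex}(n,H,F)$ is the maximum of $\mathcal{N}(H,G)$ over $F$-free graphs $G$ on $n$ vertices. *)

theory Defs
  imports Main
begin

type_synonym 'a graph = "'a set \<times> 'a set set"

definition is_graph :: "'a graph \<Rightarrow> bool" where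
  "is_graph G \<longleftrightarrow> finite (fst G) \<and> (\<forall>e\<in>snd G. e \<subseteq> fst G \<and> card e = 2)"

definition subgraph :: "'a graph \<Rightarrow> 'a graph \<Rightarrow> bool" where
  "subgraph S G \<longleftrightarrow> is_graph S \<and> fst S \<subseteq> fst G \<and> snd S \<subseteq> snd G"

definition graph_iso :: "'a graph \<Rightarrow> 'b graph \<Rightarrow> bool" where
  "graph_iso G H \<longleftrightarrow> (\<exists>f. bij_betw f (fst G) (fst H) \<and> snd H = (\<lambda>e. f ` e) ` snd G)"

definition count_sub :: "'b graph \<Rightarrow> 'a graph \<Rightarrow> nat" where
  "count_sub H G = card {S. subgraph S G \<and> graph_iso S H}"

definition H_free :: "'b graph \<Rightarrow> 'a graph \<Rightarrow> bool" where
  "H_free F G \<longleftrightarrow> \<not> (\<exists>S. subgraph S G \<and> graph_iso S F)"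

text \<open>ex(n,H,F): maximum of N(H,G) over F-free graphs G on n vertices
  (vertex set {0..<n}; counts are isomorphism invariant).\<close>
definition gen_ex :: "nat \<Rightarrow> 'b graph \<Rightarrow> 'c graph \<Rightarrow> nat" where
  "gen_ex n H F = Max {count_sub H G | G :: nat graph.
      is_graph G \<and> fst G = {0..<n} \<and> H_free F G}"

definition M2 :: "nat graph" where
  "M2 = ({0,1,2,3}, {{0,1},{2,3}})"

definition P4 :: "nat graph" where
  "P4 = ({0,1,2,3}, {{0,1},{1,2},{2,3}})"

text \<open>D(k,n): floor(n/k) disjoint copies of K_k plus a clique on the remaining vertices.\<close>
definition D :: "nat \<Rightarrow> nat \<Rightarrow> nat graph" where
  "D k n = ({0..<n}, {{u,v} | u v. u < n \<and> v < n \<and> u \<noteq> v \<and> u div k = v div k})"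

end

theory Submission
  imports Defs
begin

text \<open>
  In a P4-free graph the closed neighbourhood of an edge is a whole connected component, and
  that component is a triangle or a star. On c vertices it therefore carries at most
  3 (c div 3) + [c mod 3 = 2] edges, no two of them disjoint, so copies of M2 are exactly pairs
  of edges in different components. Peeling off one component at a time, the counts of D(3,n)
  win because they are superadditive in the number of vertices; the only exception is the
  matching 2K2 itself on four vertices, which beats a triangle plus an isolated vertex.
\<close>

section \<open>Edge and matching counts of D(3,n)\<close>

text \<open>D(3,n) consists of n div 3 triangles and, if n mod 3 = 2, one further edge.\<close>

definition d3_edges :: "nat \<Rightarrow> nat" where
  "d3_edges n = 3 * (n div 3) + (if n mod 3 = 2 then 1 else 0)"

definition d3_matchings :: "nat \<Rightarrow> nat" where
  "d3_matchings n = 9 * (n div 3 choose 2) + (if n mod 3 = 2 then 3 * (n div 3) else 0)"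

lemma choose_two_add: "(a + b) choose 2 = (a choose 2) + (b choose 2) + a * b"
  by (induction b) (simp_all add: numeral_2_eq_2)

lemma mod_3_cases: "(n::nat) mod 3 = 0 \<or> n mod 3 = 1 \<or> n mod 3 = 2"
  by auto

lemma d3_edges_superadditive: "d3_edges c + d3_edges m \<le> d3_edges (c + m)"
  using mod_3_cases[of c] mod_3_cases[of m]
  by (auto simp: d3_edges_def div_add1_eq[of c m] mod_add_eq[symmetric, of c m 3])

lemma d3_matchings_superadditive:
  assumes "\<not> (c = 2 \<and> m = 2)"
  shows "d3_matchings c + d3_matchings m + d3_edges c * d3_edges m \<le> d3_matchings (c + m)"
  using mod_3_cases[of c] mod_3_cases[of m] assms
  by (auto simp: d3_edges_def d3_matchings_def div_add1_eq[of c m] mod_add_eq[symmetric, of c m 3]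
      choose_two_add binomial_eq_0 algebra_simps)

lemma le_d3_edges_Suc: "n \<le> Suc (d3_edges n)"
  unfolding d3_edges_def by presburger

lemma d3_component_step:
  fixes l x y p c r :: nat
  assumes x: "1 \<le> x" "x \<le> d3_edges c"
    and rest: "(l + x) * y + p \<le> (l + x) * d3_edges r + d3_matchings r"
  shows "l * (x + y) + (p + x * y)
    \<le> l * d3_edges (c + r) + d3_matchings (c + r) + (if c + r = 4 \<and> l = 0 then 1 else 0)"
proof (cases "c = 2 \<and> r = 2")
  case True
  have "d3_edges 2 = 1" "d3_matchings 2 = 0" "d3_edges 4 = 3" "d3_matchings 4 = 0"
    by (simp_all add: d3_edges_def d3_matchings_def)
  with True x have "x = 1"
    by simp
  have "l * (x + y) + (p + x * y) = l + ((l + x) * y + p)"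
    using \<open>x = 1\<close> by (simp add: algebra_simps)
  also have "\<dots> \<le> l + (l + 1)"
    using rest True \<open>x = 1\<close> \<open>d3_edges 2 = 1\<close> \<open>d3_matchings 2 = 0\<close> by simp
  finally show ?thesis
    using True \<open>d3_edges 4 = 3\<close> \<open>d3_matchings 4 = 0\<close> by simp
next
  case False
  have "l * (x + y) + (p + x * y) = l * x + ((l + x) * y + p)"
    by (simp add: algebra_simps)
  also have "\<dots> \<le> l * x + (l + x) * d3_edges r + d3_matchings r"
    using rest by simp
  also have "\<dots> = l * x + l * d3_edges r + x * d3_edges r + d3_matchings r"
    by (simp add: algebra_simps)
  also have "\<dots> \<le> l * d3_edges c + l * d3_edges r + d3_edges c * d3_edges r + d3_matchings r"
    using x(2) by (intro add_mono mult_left_mono mult_right_mono order_refl) simp_all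
  also have "\<dots> = l * (d3_edges c + d3_edges r) + (d3_edges c * d3_edges r + d3_matchings r)"
    by (simp add: algebra_simps)
  also have "\<dots> \<le> l * d3_edges (c + r) + d3_matchings (c + r)"
    using d3_edges_superadditive[of c r] d3_matchings_superadditive[OF False]
    by (intro add_mono mult_left_mono) simp_all
  finally show ?thesis
    by simp
qed

section \<open>Copies of a graph as injective images\<close>

definition graph_image :: "('a \<Rightarrow> 'b) \<Rightarrow> 'a graph \<Rightarrow> 'b graph" where
  "graph_image g H = (g ` fst H, (\<lambda>e. g ` e) ` snd H)"

lemma is_graph_graph_image:
  assumes "is_graph H" "inj_on g (fst H)"
  shows "is_graph (graph_image g H)"
  using assms unfolding is_graph_def graph_image_def
  by (auto simp: card_image inj_on_subset)

lemma graph_iso_graph_image: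
  assumes "is_graph H" "inj_on g (fst H)"
  shows "graph_iso (graph_image g H) H"
proof -
  let ?f = "inv_into (fst H) g"
  have "bij_betw ?f (g ` fst H) (fst H)"
    using assms(2) by (simp add: bij_betw_inv_into inj_on_imp_bij_betw)
  moreover have "?f ` g ` e = e" if "e \<in> snd H" for e
    using that assms unfolding is_graph_def by (simp add: inv_into_image_cancel)
  then have "snd H = (\<lambda>e. ?f ` e) ` snd (graph_image g H)"
    unfolding graph_image_def by (simp add: image_image)
  ultimately show ?thesis
    unfolding graph_iso_def graph_image_def by auto
qed

lemma graph_iso_obtain_graph_image:
  assumes "is_graph S" "graph_iso S H"
  obtains g where "inj_on g (fst H)" "S = graph_image g H"
proof -
  obtain f where f: "bij_betw f (fst S) (fst H)" and E: "snd H = (\<lambda>e. f ` e) ` snd S"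
    using assms(2) unfolding graph_iso_def by blast
  let ?g = "inv_into (fst S) f"
  have g: "bij_betw ?g (fst H) (fst S)"
    using f by (rule bij_betw_inv_into)
  have "?g ` f ` e = e" if "e \<in> snd S" for e
    using that assms(1) f unfolding is_graph_def bij_betw_def by (simp add: inv_into_image_cancel)
  then have "(\<lambda>e. ?g ` e) ` snd H = snd S"
    unfolding E by (simp add: image_image)
  then have "S = graph_image ?g H"
    using g unfolding graph_image_def bij_betw_def by (simp add: prod_eq_iff)
  with g show ?thesis
    using that bij_betw_imp_inj_on by blast
qed

lemma subgraph_iso_iff_embedding:
  assumes "is_graph H"
  shows "subgraph S G \<and> graph_iso S H \<longleftrightarrow>
    (\<exists>g. inj_on g (fst H) \<and> S = graph_image g H \<and> g ` fst H \<subseteq> fst G \<and> (\<lambda>e. g ` e) ` snd H \<subseteq> snd G)"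
proof
  assume "subgraph S G \<and> graph_iso S H"
  then show "\<exists>g. inj_on g (fst H) \<and> S = graph_image g H \<and>
    g ` fst H \<subseteq> fst G \<and> (\<lambda>e. g ` e) ` snd H \<subseteq> snd G"
    unfolding subgraph_def
    by (metis graph_iso_obtain_graph_image graph_image_def fst_conv snd_conv)
next
  assume "\<exists>g. inj_on g (fst H) \<and> S = graph_image g H \<and>
    g ` fst H \<subseteq> fst G \<and> (\<lambda>e. g ` e) ` snd H \<subseteq> snd G"
  then obtain g where "inj_on g (fst H)" "S = graph_image g H"
    "g ` fst H \<subseteq> fst G" "(\<lambda>e. g ` e) ` snd H \<subseteq> snd G"
    by blast
  moreover from this have "is_graph S" "graph_iso S H"
    using assms by (simp_all add: is_graph_graph_image graph_iso_graph_image)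
  ultimately show "subgraph S G \<and> graph_iso S H"
    unfolding subgraph_def graph_image_def by simp
qed

lemma H_free_iff_no_embedding:
  assumes "is_graph H"
  shows "H_free H G \<longleftrightarrow>
    \<not> (\<exists>g. inj_on g (fst H) \<and> g ` fst H \<subseteq> fst G \<and> (\<lambda>e. g ` e) ` snd H \<subseteq> snd G)"
proof -
  have "(\<exists>S. subgraph S G \<and> graph_iso S H) \<longleftrightarrow>
    (\<exists>g. inj_on g (fst H) \<and> g ` fst H \<subseteq> fst G \<and> (\<lambda>e. g ` e) ` snd H \<subseteq> snd G)"
    using subgraph_iso_iff_embedding[OF assms] by blast
  then show ?thesis
    unfolding H_free_def by (rule arg_cong[where f = Not])
qed

section \<open>Copies of M2 and P4\<close>

definition disjoint_edge_pairs :: "'a set set \<Rightarrow> 'a set set set" where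
  "disjoint_edge_pairs E = {{x, y} | x y. x \<in> E \<and> y \<in> E \<and> x \<inter> y = {}}"

definition P4_free_edges :: "'a set set \<Rightarrow> bool" where
  "P4_free_edges E \<longleftrightarrow>
    \<not> (\<exists>a b c d. distinct [a, b, c, d] \<and> {a, b} \<in> E \<and> {b, c} \<in> E \<and> {c, d} \<in> E)"

lemma disjoint_edge_pairs_doubleton:
  assumes "a \<inter> b = {}" "a \<noteq> {}" "b \<noteq> {}"
  shows "disjoint_edge_pairs {a, b} = {{a, b}}"
proof (intro equalityI subsetI)
  fix P assume "P \<in> disjoint_edge_pairs {a, b}"
  then obtain x y where xy: "x \<in> {a, b}" "y \<in> {a, b}" "x \<inter> y = {}" "P = {x, y}"
    unfolding disjoint_edge_pairs_def by blast
  then have "x \<noteq> y"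
    using assms(2,3) by auto
  then show "P \<in> {{a, b}}"
    using xy by blast
next
  fix P assume "P \<in> {{a, b}}"
  then show "P \<in> disjoint_edge_pairs {a, b}"
    using assms(1) unfolding disjoint_edge_pairs_def by blast
qed

lemma P4_free_edges_subset: "P4_free_edges E \<Longrightarrow> F \<subseteq> E \<Longrightarrow> P4_free_edges F"
  unfolding P4_free_edges_def by blast

lemma ex_inj_on_four_iff:
  "(\<exists>g. inj_on g {0, 1, 2, 3 :: nat} \<and> P (g 0) (g 1) (g 2) (g 3)) \<longleftrightarrow>
   (\<exists>a b c d. distinct [a, b, c, d] \<and> P a b c d)"
proof
  assume "\<exists>a b c d. distinct [a, b, c, d] \<and> P a b c d"
  then obtain a b c d where "distinct [a, b, c, d]" "P a b c d"
    by blast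
  moreover from this(1) have "inj_on (nth [a, b, c, d]) {0, 1, 2, 3}"
    by (rule inj_on_nth) simp
  ultimately show "\<exists>g. inj_on g {0, 1, 2, 3 :: nat} \<and> P (g 0) (g 1) (g 2) (g 3)"
    by (intro exI[of _ "nth [a, b, c, d]"]) (simp add: numeral_2_eq_2 numeral_3_eq_3)
next
  assume "\<exists>g. inj_on g {0, 1, 2, 3 :: nat} \<and> P (g 0) (g 1) (g 2) (g 3)"
  then obtain g where "inj_on g {0, 1, 2, 3 :: nat}" "P (g 0) (g 1) (g 2) (g 3)"
    by blast
  moreover from this(1) have "g i \<noteq> g j" if "i \<noteq> j" "i \<in> {0, 1, 2, 3}" "j \<in> {0, 1, 2, 3}" for i j
    using that by (meson inj_onD)
  then have "distinct [g 0, g 1, g 2, g 3]"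
    by simp
  ultimately show "\<exists>a b c d. distinct [a, b, c, d] \<and> P a b c d"
    by blast
qed

lemma M2_copy_iff:
  assumes "is_graph G"
  shows "subgraph S G \<and> graph_iso S M2 \<longleftrightarrow>
    (\<exists>a b c d. distinct [a, b, c, d] \<and> S = ({a, b, c, d}, {{a, b}, {c, d}}) \<and>
      {a, b} \<in> snd G \<and> {c, d} \<in> snd G)"
proof -
  have M2: "is_graph M2" "fst M2 = {0, 1, 2, 3}" "snd M2 = {{0, 1}, {2, 3}}"
    by (auto simp: M2_def is_graph_def)
  have "subgraph S G \<and> graph_iso S M2 \<longleftrightarrow> (\<exists>g. inj_on g {0, 1, 2, 3} \<and>
      S = graph_image g M2 \<and> g ` {0, 1, 2, 3} \<subseteq> fst G \<and> (\<lambda>e. g ` e) ` snd M2 \<subseteq> snd G)"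
    by (simp only: subgraph_iso_iff_embedding[OF M2(1)] M2(2))
  also have "\<dots> \<longleftrightarrow> (\<exists>g. inj_on g {0, 1, 2, 3 :: nat} \<and>
      S = ({g 0, g 1, g 2, g 3}, {{g 0, g 1}, {g 2, g 3}}) \<and> {g 0, g 1} \<in> snd G \<and> {g 2, g 3} \<in> snd G)"
    using assms by (intro ex_cong1 conj_cong[OF refl, of "inj_on _ _"])
      (auto simp: graph_image_def M2 is_graph_def)
  also have "\<dots> \<longleftrightarrow>
    (\<exists>a b c d. distinct [a, b, c, d] \<and> S = ({a, b, c, d}, {{a, b}, {c, d}}) \<and>
      {a, b} \<in> snd G \<and> {c, d} \<in> snd G)"
    by (rule ex_inj_on_four_iff[where
          P = "\<lambda>a b c d. S = ({a, b, c, d}, {{a, b}, {c, d}}) \<and> {a, b} \<in> snd G \<and> {c, d} \<in> snd G"])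
  finally show ?thesis .
qed

lemma M2_copies_eq:
  assumes "is_graph G"
  shows "{S. subgraph S G \<and> graph_iso S M2} = (\<lambda>P. (\<Union>P, P)) ` disjoint_edge_pairs (snd G)"
proof -
  have edge: "e \<in> snd G \<Longrightarrow> \<exists>a b. a \<noteq> b \<and> e = {a, b}" for e
    using assms unfolding is_graph_def by (meson card_2_iff)
  have image_mem: "S \<in> (\<lambda>P. (\<Union>P, P)) ` disjoint_edge_pairs (snd G) \<longleftrightarrow>
    (\<exists>x y. x \<in> snd G \<and> y \<in> snd G \<and> x \<inter> y = {} \<and> S = (x \<union> y, {x, y}))" for S
    unfolding disjoint_edge_pairs_def by (simp add: image_iff) blast
  have pair_iff: "(\<exists>x y. x \<in> snd G \<and> y \<in> snd G \<and> x \<inter> y = {} \<and> S = (x \<union> y, {x, y})) \<longleftrightarrow>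
    (\<exists>a b c d. distinct [a, b, c, d] \<and> S = ({a, b, c, d}, {{a, b}, {c, d}}) \<and>
      {a, b} \<in> snd G \<and> {c, d} \<in> snd G)"
    for S
  proof
    assume "\<exists>x y. x \<in> snd G \<and> y \<in> snd G \<and> x \<inter> y = {} \<and> S = (x \<union> y, {x, y})"
    then obtain x y where xy: "x \<in> snd G" "y \<in> snd G" "x \<inter> y = {}" "S = (x \<union> y, {x, y})"
      by blast
    obtain a b c d where ab: "a \<noteq> b" "x = {a, b}" and cd: "c \<noteq> d" "y = {c, d}"
      using edge xy(1,2) by metis
    have "distinct [a, b, c, d]"
      using ab cd xy(3) by auto
    moreover have "S = ({a, b, c, d}, {{a, b}, {c, d}})"
      using ab(2) cd(2) xy(4) by auto
    ultimately show "\<exists>a b c d. distinct [a, b, c, d] \<and> S = ({a, b, c, d}, {{a, b}, {c, d}}) \<and>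
      {a, b} \<in> snd G \<and> {c, d} \<in> snd G"
      using ab(2) cd(2) xy(1,2) by blast
  next
    assume "\<exists>a b c d. distinct [a, b, c, d] \<and> S = ({a, b, c, d}, {{a, b}, {c, d}}) \<and>
      {a, b} \<in> snd G \<and> {c, d} \<in> snd G"
    then obtain a b c d where "distinct [a, b, c, d]" "S = ({a, b, c, d}, {{a, b}, {c, d}})"
      "{a, b} \<in> snd G" "{c, d} \<in> snd G"
      by blast
    then show "\<exists>x y. x \<in> snd G \<and> y \<in> snd G \<and> x \<inter> y = {} \<and> S = (x \<union> y, {x, y})"
      by (intro exI[of _ "{a, b}"] exI[of _ "{c, d}"]) auto
  qed
  show ?thesis
    by (rule set_eqI) (simp only: mem_Collect_eq image_mem pair_iff M2_copy_iff[OF assms])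
qed

lemma count_sub_M2:
  assumes "is_graph G"
  shows "count_sub M2 G = card (disjoint_edge_pairs (snd G))"
proof -
  have "inj_on (\<lambda>P. (\<Union>P, P)) (disjoint_edge_pairs (snd G))"
    by (rule inj_onI) simp
  then show ?thesis
    unfolding count_sub_def M2_copies_eq[OF assms] by (rule card_image)
qed

lemma H_free_P4_iff:
  assumes "is_graph G"
  shows "H_free P4 G \<longleftrightarrow> P4_free_edges (snd G)"
proof -
  have P4: "is_graph P4" "fst P4 = {0, 1, 2, 3}" "snd P4 = {{0, 1}, {1, 2}, {2, 3}}"
    by (auto simp: P4_def is_graph_def)
  have sub: "e \<in> snd G \<Longrightarrow> e \<subseteq> fst G" for e
    using assms unfolding is_graph_def by blast
  have "(\<exists>g. inj_on g (fst P4) \<and> g ` fst P4 \<subseteq> fst G \<and> (\<lambda>e. g ` e) ` snd P4 \<subseteq> snd G) \<longleftrightarrow>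
    (\<exists>g. inj_on g {0, 1, 2, 3 :: nat} \<and>
      {g 0, g 1} \<in> snd G \<and> {g 1, g 2} \<in> snd G \<and> {g 2, g 3} \<in> snd G)"
    unfolding P4(2)
    by (intro ex_cong1 conj_cong[OF refl, of "inj_on _ _"]) (auto simp: P4 dest: sub)
  also have "\<dots> \<longleftrightarrow>
    (\<exists>a b c d. distinct [a, b, c, d] \<and> {a, b} \<in> snd G \<and> {b, c} \<in> snd G \<and> {c, d} \<in> snd G)"
    by (rule ex_inj_on_four_iff[where
          P = "\<lambda>a b c d. {a, b} \<in> snd G \<and> {b, c} \<in> snd G \<and> {c, d} \<in> snd G"])
  finally show ?thesis
    unfolding H_free_iff_no_embedding[OF P4(1)] P4_free_edges_def by (rule arg_cong[where f = Not])
qed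

section \<open>Components of P4-free graphs\<close>

definition neighbours :: "'a set set \<Rightarrow> 'a \<Rightarrow> 'a set" where
  "neighbours E x = {y. {x, y} \<in> E}"

definition clique_edges :: "'a set \<Rightarrow> 'a set set" where
  "clique_edges S = {e. e \<subseteq> S \<and> card e = 2}"

lemma finite_clique_edges: "finite S \<Longrightarrow> finite (clique_edges S)"
  unfolding clique_edges_def by (rule finite_subset[of _ "Pow S"]) auto

lemma card_clique_edges: "finite S \<Longrightarrow> card (clique_edges S) = card S choose 2"
  unfolding clique_edges_def by (rule n_subsets)

lemma finite_neighbours:
  assumes "finite E" "\<And>e. e \<in> E \<Longrightarrow> finite e"
  shows "finite (neighbours E x)"
proof (rule finite_subset)
  show "neighbours E x \<subseteq> \<Union>E"
    unfolding neighbours_def by blast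
  show "finite (\<Union>E)"
    using assms by blast
qed

locale P4_free_component =
  fixes E :: "'a set set" and u v :: 'a
  assumes card_edge: "e \<in> E \<Longrightarrow> card e = 2"
    and P4_free: "P4_free_edges E"
    and edge_uv: "{u, v} \<in> E"
begin

abbreviation component :: "'a set" where
  "component \<equiv> neighbours E u \<union> neighbours E v"
  \<comment> \<open>the closed neighbourhood of the edge uv: it contains u and v themselves\<close>

lemma edge_neq: "{x, y} \<in> E \<Longrightarrow> x \<noteq> y"
  using card_edge by fastforce

lemma no_path:
  assumes "{a, b} \<in> E" "{b, c} \<in> E" "{c, d} \<in> E" "a \<noteq> c" "b \<noteq> d" "a \<noteq> d"
  shows False
proof -
  have "distinct [a, b, c, d]"
    using assms edge_neq[OF assms(1)] edge_neq[OF assms(2)] edge_neq[OF assms(3)] by simp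
  then show False
    using assms(1-3) P4_free unfolding P4_free_edges_def by blast
qed

lemma swap: "P4_free_component E v u"
  using card_edge P4_free edge_uv by unfold_locales (simp_all add: insert_commute)

lemma component_edge_hits_uv:
  assumes xy: "{x, y} \<in> E" and x: "x \<in> component"
  shows "x \<in> {u, v} \<or> y \<in> {u, v}"
proof (rule ccontr)
  assume "\<not> (x \<in> {u, v} \<or> y \<in> {u, v})"
  then have "y \<noteq> u" "y \<noteq> v" "x \<noteq> u" "x \<noteq> v"
    by auto
  have vu: "{v, u} \<in> E"
    using edge_uv by (simp add: insert_commute)
  have yx: "{y, x} \<in> E"
    using xy by (simp add: insert_commute)
  from x consider "{x, u} \<in> E" | "{x, v} \<in> E"
    by (auto simp: neighbours_def insert_commute)
  then show False
  proof cases
    case 1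
    show False
      by (rule no_path[OF yx 1 edge_uv]) fact+
  next
    case 2
    show False
      by (rule no_path[OF yx 2 vu]) fact+
  qed
qed

lemma component_closed:
  assumes "{x, y} \<in> E" "x \<in> component"
  shows "y \<in> component"
  using component_edge_hits_uv[OF assms] assms(1) edge_uv
  by (auto simp: neighbours_def insert_commute)

lemma component_edge_meets:
  assumes "e \<in> E" "e \<subseteq> component"
  shows "u \<in> e \<or> v \<in> e"
proof -
  obtain x y where "e = {x, y}"
    using card_edge[OF assms(1)] by (meson card_2_iff)
  then show ?thesis
    using component_edge_hits_uv[of x y] assms by auto
qed

lemma component_disjoint_edge_pairs: "disjoint_edge_pairs {e \<in> E. e \<subseteq> component} = {}"
proof -
  have u_side: False if x: "x \<in> E" "x \<subseteq> component" and y: "y \<in> E" "y \<subseteq> component"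
    and disj: "x \<inter> y = {}" and ux: "u \<in> x" for x y
  proof -
    have "v \<in> y" "u \<notin> y" "v \<notin> x"
      using x y disj ux component_edge_meets by blast+
    obtain p where p: "x = {u, p}"
      using card_edge[OF x(1)] ux by (metis card_2_iff insert_commute insertE singletonD)
    obtain q where q: "y = {v, q}"
      using card_edge[OF y(1)] \<open>v \<in> y\<close> by (metis card_2_iff insert_commute insertE singletonD)
    have "{p, u} \<in> E" "{v, q} \<in> E"
      using x(1) y(1) p q by (simp_all add: insert_commute)
    moreover have "p \<noteq> v" "u \<noteq> q" "p \<noteq> q"
      using \<open>v \<notin> x\<close> \<open>u \<notin> y\<close> disj p q by auto
    ultimately show False
      using no_path edge_uv by blast
  qed
  have False if "x \<in> E" "x \<subseteq> component" "y \<in> E" "y \<subseteq> component" "x \<inter> y = {}" for x y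
  proof -
    have "u \<in> x \<or> u \<in> y"
      using that component_edge_meets by blast
    then show False
      using u_side[of x y] u_side[of y x] that by (auto simp: Int_commute)
  qed
  then show ?thesis
    unfolding disjoint_edge_pairs_def by blast
qed

lemma finite_component: "finite E \<Longrightarrow> finite component"
  using finite_neighbours card_edge by (metis card.infinite finite_UnI zero_neq_numeral)

lemma star_edges_less:
  assumes fin: "finite E" and star: "neighbours E v = {u}"
  shows "card {e \<in> E. e \<subseteq> component} < card component"
proof -
  have u: "u \<notin> neighbours E u"
    using card_edge[of "{u}"] by (auto simp: neighbours_def)
  have fin_u: "finite (neighbours E u)"
    using finite_component[OF fin] by simp
  have "{e \<in> E. e \<subseteq> component} \<subseteq> (\<lambda>y. {u, y}) ` neighbours E u"
  proof
    fix e assume e: "e \<in> {e \<in> E. e \<subseteq> component}"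
    obtain x y where xy: "e = {x, y}"
      using e card_edge by (metis (no_types, lifting) card_2_iff mem_Collect_eq)
    have "u \<in> e \<or> v \<in> e"
      using e component_edge_meets by blast
    then consider "x = u" | "y = u" | "x = v" | "y = v"
      using xy by blast
    then show "e \<in> (\<lambda>y. {u, y}) ` neighbours E u"
      using e xy star edge_uv by cases (auto simp: neighbours_def insert_commute)
  qed
  then have "card {e \<in> E. e \<subseteq> component} \<le> card (neighbours E u)"
    using fin_u by (meson card_image_le card_mono finite_imageI le_trans)
  also have "\<dots> < card (insert u (neighbours E u))"
    using u fin_u by simp
  also have "insert u (neighbours E u) = component"
    using star by blast
  finally show ?thesis .
qed

lemma component_triangle_or_star:
  assumes fin: "finite E"
  shows "card component = 3 \<or> card {e \<in> E. e \<subseteq> component} < card component"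
proof (cases "neighbours E u - {v} = {} \<or> neighbours E v - {u} = {}")
  case False
  then obtain x y where x: "x \<in> neighbours E u - {v}" and y: "y \<in> neighbours E v - {u}"
    by blast
  have same: "z = w" if "z \<in> neighbours E u - {v}" "w \<in> neighbours E v - {u}" for z w
  proof (rule ccontr)
    assume "z \<noteq> w"
    moreover have "{z, u} \<in> E" "{v, w} \<in> E" "z \<noteq> v" "u \<noteq> w"
      using that by (auto simp: neighbours_def insert_commute)
    ultimately show False
      using no_path[of z u v w] edge_uv by blast
  qed
  have "neighbours E u \<subseteq> {v, x}" "neighbours E v \<subseteq> {u, x}"
    using same[OF _ y] same[OF x] same[OF x y] by blast+
  moreover have "u \<in> neighbours E v" "v \<in> neighbours E u" "x \<in> neighbours E u"
    using edge_uv x by (simp_all add: neighbours_def insert_commute)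
  ultimately have "component = {u, v, x}"
    by blast
  moreover have "x \<noteq> u" "x \<noteq> v" "u \<noteq> v"
    using x edge_uv edge_neq by (auto simp: neighbours_def)
  ultimately show ?thesis
    by simp
next
  case True
  moreover have "u \<in> neighbours E v" "v \<in> neighbours E u"
    using edge_uv by (simp_all add: neighbours_def insert_commute)
  ultimately have "neighbours E v = {u} \<or> neighbours E u = {v}"
    by blast
  moreover have "neighbours E u = {v} \<Longrightarrow> card {e \<in> E. e \<subseteq> component} < card component"
    using P4_free_component.star_edges_less[OF swap fin] by (simp only: Un_commute)
  ultimately show ?thesis
    using star_edges_less[OF fin] by blast
qed

lemma card_component_edges:
  assumes fin: "finite E"
  shows "card {e \<in> E. e \<subseteq> component} \<le> d3_edges (card component)"
  using component_triangle_or_star[OF fin]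
proof
  assume three: "card component = 3"
  have "{e \<in> E. e \<subseteq> component} \<subseteq> clique_edges component"
    using card_edge unfolding clique_edges_def by blast
  then have "card {e \<in> E. e \<subseteq> component} \<le> card (clique_edges component)"
    using finite_component[OF fin] by (simp add: card_mono clique_edges_def)
  also have "\<dots> = d3_edges (card component)"
    using finite_component[OF fin] three by (simp add: card_clique_edges d3_edges_def choose_two)
  finally show ?thesis .
next
  assume "card {e \<in> E. e \<subseteq> component} < card component"
  then show ?thesis
    using le_d3_edges_Suc[of "card component"] by linarith
qed

end

lemma finite_disjoint_edge_pairs: "finite E \<Longrightarrow> finite (disjoint_edge_pairs E)"
  by (rule finite_subset[of _ "Pow E"]) (auto simp: disjoint_edge_pairs_def)

lemma card_disjoint_edge_pairs_Un:
  assumes fin: "finite A" "finite B" and nonempty: "{} \<notin> B"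
    and disj: "\<And>a b. a \<in> A \<Longrightarrow> b \<in> B \<Longrightarrow> a \<inter> b = {}"
    and B: "disjoint_edge_pairs B = {}"
  shows "card (disjoint_edge_pairs (A \<union> B)) = card (disjoint_edge_pairs A) + card A * card B"
proof -
  let ?join = "\<lambda>(a, b). {a, b}"
  have AB: "A \<inter> B = {}"
  proof (rule equals0I)
    fix b assume "b \<in> A \<inter> B"
    then have "b \<in> B" "b = {}"
      using disj[of b b] by auto
    then show False
      using nonempty by simp
  qed
  have split: "disjoint_edge_pairs (A \<union> B) = disjoint_edge_pairs A \<union> ?join ` (A \<times> B)"
  proof (intro equalityI subsetI)
    fix P assume "P \<in> disjoint_edge_pairs (A \<union> B)"
    then obtain x y where xy: "x \<in> A \<union> B" "y \<in> A \<union> B" "x \<inter> y = {}" "P = {x, y}"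
      unfolding disjoint_edge_pairs_def by blast
    have "\<not> (x \<in> B \<and> y \<in> B)"
      using B xy unfolding disjoint_edge_pairs_def by blast
    then consider "x \<in> A" "y \<in> A" | "x \<in> A" "y \<in> B" | "x \<in> B" "y \<in> A"
      using xy by blast
    then show "P \<in> disjoint_edge_pairs A \<union> ?join ` (A \<times> B)"
    proof cases
      case 1
      then show ?thesis
        using xy unfolding disjoint_edge_pairs_def by blast
    next
      case 2
      then have "P = ?join (x, y)"
        using xy by simp
      then show ?thesis
        using 2 by blast
    next
      case 3
      then have "P = ?join (y, x)"
        using xy by (simp add: insert_commute)
      then show ?thesis
        using 3 by blast
    qed
  next
    fix P assume "P \<in> disjoint_edge_pairs A \<union> ?join ` (A \<times> B)"
    then consider "P \<in> disjoint_edge_pairs A" | a b where "a \<in> A" "b \<in> B" "P = {a, b}"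
      by blast
    then show "P \<in> disjoint_edge_pairs (A \<union> B)"
    proof cases
      case 1
      then show ?thesis
        unfolding disjoint_edge_pairs_def by blast
    next
      case 2
      then show ?thesis
        using disj[of a b] unfolding disjoint_edge_pairs_def by blast
    qed
  qed
  have "disjoint_edge_pairs A \<inter> ?join ` (A \<times> B) = {}"
    using AB unfolding disjoint_edge_pairs_def by (auto simp: doubleton_eq_iff)
  then have "card (disjoint_edge_pairs (A \<union> B)) = card (disjoint_edge_pairs A) + card (?join ` (A \<times> B))"
    unfolding split using fin
    by (intro card_Un_disjoint finite_disjoint_edge_pairs finite_imageI finite_cartesian_product)
  moreover have "inj_on ?join (A \<times> B)"
    using AB by (auto intro!: inj_onI simp: doubleton_eq_iff)
  ultimately show ?thesis
    by (simp add: card_image card_cartesian_product)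
qed

lemma finite_snd: "is_graph G \<Longrightarrow> finite (snd G)"
  unfolding is_graph_def by (meson Pow_iff finite_Pow_iff finite_subset subsetI)

lemma is_graph_induced: "is_graph G \<Longrightarrow> W \<subseteq> fst G \<Longrightarrow> is_graph (W, {e \<in> snd G. e \<subseteq> W})"
  unfolding is_graph_def using finite_subset by auto

lemma card_edges_split_closed:
  assumes G: "is_graph (V, E)" and closed: "\<And>x y. {x, y} \<in> E \<Longrightarrow> x \<in> C \<Longrightarrow> y \<in> C"
  defines "EC \<equiv> {e \<in> E. e \<subseteq> C}" and "ER \<equiv> {e \<in> E. e \<subseteq> V - C}"
  shows "card E = card ER + card EC"
    and "disjoint_edge_pairs EC = {} \<Longrightarrow>
      card (disjoint_edge_pairs E) = card (disjoint_edge_pairs ER) + card ER * card EC"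
proof -
  have wf: "\<And>e. e \<in> E \<Longrightarrow> e \<subseteq> V \<and> card e = 2" and finV: "finite V"
    using G unfolding is_graph_def by auto
  have E_split: "E = ER \<union> EC"
  proof (intro equalityI subsetI)
    fix e assume e: "e \<in> E"
    then obtain x y where xy: "e = {x, y}"
      using wf by (meson card_2_iff)
    have "{y, x} \<in> E"
      using e xy by (simp add: insert_commute)
    then have "x \<in> C \<longleftrightarrow> y \<in> C"
      using e xy closed by blast
    then show "e \<in> ER \<union> EC"
      using e xy wf unfolding ER_def EC_def by blast
  next
    fix e assume "e \<in> ER \<union> EC"
    then show "e \<in> E"
      unfolding ER_def EC_def by blast
  qed
  have disj: "a \<inter> b = {}" if "a \<in> ER" "b \<in> EC" for a b
    using that unfolding ER_def EC_def by blast
  have nonempty: "{} \<notin> EC"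
    unfolding EC_def using wf by fastforce
  have "finite E"
    using finite_snd[OF G] by simp
  then have fin: "finite ER" "finite EC"
    unfolding ER_def EC_def by simp_all
  have "ER \<inter> EC = {}"
    using disj nonempty by (metis disjoint_iff inf.idem)
  then show "card E = card ER + card EC"
    unfolding E_split using fin by (rule card_Un_disjoint[rotated 2])
  show "card (disjoint_edge_pairs E) = card (disjoint_edge_pairs ER) + card ER * card EC"
    if "disjoint_edge_pairs EC = {}"
    unfolding E_split by (rule card_disjoint_edge_pairs_Un[OF fin nonempty disj that])
qed

lemma P4_free_obtain_component:
  assumes graph: "is_graph (V, E)" and P4: "P4_free_edges E" and "E \<noteq> {}"
  obtains C where "C \<subseteq> V" "C \<noteq> {}" "\<And>x y. {x, y} \<in> E \<Longrightarrow> x \<in> C \<Longrightarrow> y \<in> C"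
    "1 \<le> card {e \<in> E. e \<subseteq> C}" "card {e \<in> E. e \<subseteq> C} \<le> d3_edges (card C)"
    "disjoint_edge_pairs {e \<in> E. e \<subseteq> C} = {}"
proof -
  have wf: "\<And>e. e \<in> E \<Longrightarrow> e \<subseteq> V \<and> card e = 2" and finE: "finite E"
    using graph finite_snd[OF graph] unfolding is_graph_def by auto
  obtain u v where uv: "{u, v} \<in> E"
    using wf \<open>E \<noteq> {}\<close> by (metis card_2_iff ex_in_conv)
  interpret P4_free_component E u v
    using wf P4 uv by unfold_locales simp_all
  have "component \<subseteq> V"
    unfolding neighbours_def using wf by blast
  moreover have "{u, v} \<in> {e \<in> E. e \<subseteq> component}"
    unfolding neighbours_def using uv by (simp add: insert_commute)
  then have "component \<noteq> {}" "1 \<le> card {e \<in> E. e \<subseteq> component}"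
    using finE by (auto simp: Suc_le_eq card_gt_0_iff)
  ultimately show ?thesis
    using that component_closed card_component_edges[OF finE] component_disjoint_edge_pairs by blast
qed

text \<open>The weight l counts edges outside G, each forming a copy of M2 with every edge of G;
  this is the quantity that survives removing one component in the induction.\<close>

lemma P4_free_weighted_matching_bound:
  assumes "is_graph G" "P4_free_edges (snd G)"
  shows "l * card (snd G) + card (disjoint_edge_pairs (snd G))
    \<le> l * d3_edges (card (fst G)) + d3_matchings (card (fst G)) +
      (if card (fst G) = 4 \<and> l = 0 then 1 else 0)"
  using assms
proof (induction "card (fst G)" arbitrary: G l rule: less_induct)
  case less
  obtain V E where G: "G = (V, E)"
    by fastforce
  have graph: "is_graph (V, E)" and P4: "P4_free_edges E"
    using less.prems G by simp_all
  show ?case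
  proof (cases "E = {}")
    case True
    then show ?thesis
      by (simp add: G disjoint_edge_pairs_def)
  next
    case False
    then obtain C where C: "C \<subseteq> V" "C \<noteq> {}" and closed: "\<And>x y. {x, y} \<in> E \<Longrightarrow> x \<in> C \<Longrightarrow> y \<in> C"
      and component: "1 \<le> card {e \<in> E. e \<subseteq> C}" "card {e \<in> E. e \<subseteq> C} \<le> d3_edges (card C)"
        "disjoint_edge_pairs {e \<in> E. e \<subseteq> C} = {}"
      using P4_free_obtain_component[OF graph P4] by blast
    define EC where "EC = {e \<in> E. e \<subseteq> C}"
    define ER where "ER = {e \<in> E. e \<subseteq> V - C}"
    note x_pos = component(1)[folded EC_def] and x_le = component(2)[folded EC_def]
    have split: "card E = card ER + card EC"
      "card (disjoint_edge_pairs E) = card (disjoint_edge_pairs ER) + card ER * card EC"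
      using card_edges_split_closed[of V E C] graph closed component(3) unfolding EC_def ER_def
      by blast+
    have finV: "finite V"
      using graph unfolding is_graph_def by simp
    then have card_V: "card V = card C + card (V - C)" "card (V - C) < card V"
      using C card_Diff_subset[of C V] card_mono[of V C] finite_subset[of C V] card_gt_0_iff[of C]
      by auto
    have "is_graph (V - C, ER)"
      using is_graph_induced[OF graph, of "V - C"] unfolding ER_def by simp
    moreover have "P4_free_edges ER"
      using P4 by (rule P4_free_edges_subset) (auto simp: ER_def)
    ultimately have rest: "(l + card EC) * card ER + card (disjoint_edge_pairs ER)
      \<le> (l + card EC) * d3_edges (card (V - C)) + d3_matchings (card (V - C))"
      using less.hyps[of "(V - C, ER)" "l + card EC"] card_V(2) x_pos G by simp
    show ?thesis
      using d3_component_step[OF x_pos x_le rest] G card_V(1) split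
      by (simp add: algebra_simps)
  qed
qed

section \<open>The extremal graph D(3,n)\<close>

lemma mem_snd_D: "{u, v} \<in> snd (D k n) \<longleftrightarrow> u < n \<and> v < n \<and> u \<noteq> v \<and> u div k = v div k"
  unfolding D_def by (auto simp: doubleton_eq_iff)

lemma snd_D_subset: "e \<in> snd (D k n) \<Longrightarrow> e \<subseteq> {0..<n}"
  unfolding D_def by auto

lemma is_graph_D: "is_graph (D k n)"
  unfolding is_graph_def D_def by auto

lemma fst_D: "fst (D k n) = {0..<n}"
  by (simp add: D_def)

lemma snd_D_add_block:
  assumes "r \<le> k"
  shows "snd (D k (k * t + r)) = snd (D k (k * t)) \<union> clique_edges {k * t..<k * t + r}"
proof (cases "k = 0")
  case True
  then show ?thesis
    using assms by (auto simp: clique_edges_def)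
next
  case False
  have below: "u < k * t \<longleftrightarrow> u div k < t" for u
    using False by (simp add: div_less_iff_less_mult mult.commute)
  have block: "u div k = t" if "k * t \<le> u" "u < k * t + r" for u
    using that assms by (intro div_nat_eqI) (simp_all add: mult.commute)
  show ?thesis
  proof (intro equalityI subsetI)
    fix e assume "e \<in> snd (D k (k * t + r))"
    then obtain u v where e: "e = {u, v}"
      and uv: "u < k * t + r" "v < k * t + r" "u \<noteq> v" "u div k = v div k"
      unfolding D_def by auto
    show "e \<in> snd (D k (k * t)) \<union> clique_edges {k * t..<k * t + r}"
    proof (cases "u < k * t")
      case True
      then have "v < k * t"
        using below uv(4) by simp
      then show ?thesis
        using True e uv(3,4) mem_snd_D by blast
    next
      case False
      then have "\<not> v < k * t"
        using below uv(4) by simp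
      then show ?thesis
        using False e uv unfolding clique_edges_def by auto
    qed
  next
    fix e assume "e \<in> snd (D k (k * t)) \<union> clique_edges {k * t..<k * t + r}"
    then consider "e \<in> snd (D k (k * t))" | "e \<subseteq> {k * t..<k * t + r}" "card e = 2"
      unfolding clique_edges_def by blast
    then show "e \<in> snd (D k (k * t + r))"
    proof cases
      case 1
      then show ?thesis
        unfolding D_def by fastforce
    next
      case 2
      then obtain u v where "e = {u, v}" "u \<noteq> v"
        by (meson card_2_iff)
      with 2 block show ?thesis
        by (simp add: mem_snd_D)
    qed
  qed
qed

lemma disjoint_edge_pairs_clique_edges:
  assumes "finite S" "card S \<le> 3"
  shows "disjoint_edge_pairs (clique_edges S) = {}"
proof -
  have False if "x \<subseteq> S" "card x = 2" "y \<subseteq> S" "card y = 2" "x \<inter> y = {}" for x y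
  proof -
    have "card (x \<union> y) = 4"
      using that by (metis card_Un_disjoint card.infinite numeral_Bit0 zero_neq_numeral)
    moreover have "card (x \<union> y) \<le> card S"
      using that assms by (intro card_mono) auto
    ultimately show False
      using assms by linarith
  qed
  then show ?thesis
    unfolding disjoint_edge_pairs_def clique_edges_def by blast
qed

lemma D3_add_block_counts:
  assumes "r \<le> 3"
  shows "card (snd (D 3 (3 * t + r))) = card (snd (D 3 (3 * t))) + (r choose 2)"
    and "card (disjoint_edge_pairs (snd (D 3 (3 * t + r))))
      = card (disjoint_edge_pairs (snd (D 3 (3 * t)))) + card (snd (D 3 (3 * t))) * (r choose 2)"
proof -
  let ?A = "snd (D 3 (3 * t))" and ?B = "clique_edges {3 * t..<3 * t + r}"
  have split: "snd (D 3 (3 * t + r)) = ?A \<union> ?B"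
    using assms by (rule snd_D_add_block)
  have fin: "finite ?A" "finite ?B"
    by (simp_all add: finite_snd[OF is_graph_D] finite_clique_edges)
  have nonempty: "{} \<notin> ?B"
    unfolding clique_edges_def by simp
  have disj: "a \<inter> b = {}" if "a \<in> ?A" "b \<in> ?B" for a b
    using snd_D_subset[OF that(1)] that(2) unfolding clique_edges_def by fastforce
  have B: "card ?B = r choose 2" "disjoint_edge_pairs ?B = {}"
    using assms by (simp_all add: card_clique_edges disjoint_edge_pairs_clique_edges)
  have "?A \<inter> ?B = {}"
    using disj nonempty by (metis disjoint_iff inf.idem)
  then show "card (snd (D 3 (3 * t + r))) = card ?A + (r choose 2)"
    unfolding split using fin B(1) by (simp add: card_Un_disjoint)
  show "card (disjoint_edge_pairs (snd (D 3 (3 * t + r))))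
    = card (disjoint_edge_pairs ?A) + card ?A * (r choose 2)"
    unfolding split B(1)[symmetric] by (rule card_disjoint_edge_pairs_Un[OF fin nonempty disj B(2)])
qed

lemma D3_multiple_counts:
  "card (snd (D 3 (3 * t))) = 3 * t \<and>
   card (disjoint_edge_pairs (snd (D 3 (3 * t)))) = 9 * (t choose 2)"
proof (induction t)
  case 0
  then show ?case
    by (simp add: D_def disjoint_edge_pairs_def)
next
  case (Suc t)
  have "(3::nat) choose 2 = 3" "Suc t choose 2 = (t choose 2) + t"
    using choose_two_add[of t 1] by (simp_all add: choose_two binomial_eq_0)
  moreover have "3 * Suc t = 3 * t + 3"
    by simp
  ultimately show ?case
    using D3_add_block_counts[of 3 t] Suc by (simp only:) simp
qed

lemma D3_counts:
  "card (snd (D 3 n)) = d3_edges n"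
  "card (disjoint_edge_pairs (snd (D 3 n))) = d3_matchings n"
proof -
  have n: "n = 3 * (n div 3) + n mod 3" and "n mod 3 \<le> 3"
    by simp_all
  have "n mod 3 choose 2 = (if n mod 3 = 2 then 1 else 0)"
    using mod_3_cases[of n] by (auto simp: choose_two)
  then show "card (snd (D 3 n)) = d3_edges n"
    and "card (disjoint_edge_pairs (snd (D 3 n))) = d3_matchings n"
    using D3_add_block_counts[OF \<open>n mod 3 \<le> 3\<close>, of "n div 3", folded n]
      D3_multiple_counts[of "n div 3"]
    by (simp_all add: d3_edges_def d3_matchings_def)
qed

lemma P4_free_edges_D3: "P4_free_edges (snd (D 3 n))"
proof -
  have False if "distinct [a, b, c, d :: nat]"
    and same: "a div 3 = b div 3" "b div 3 = c div 3" "c div 3 = d div 3" for a b c d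
  proof -
    have "{a, b, c, d} \<subseteq> {3 * (a div 3)..<3 * (a div 3) + 3}"
      using same by auto
    then have "card {a, b, c, d} \<le> card {3 * (a div 3)..<3 * (a div 3) + 3}"
      by (rule card_mono[OF finite_atLeastLessThan])
    moreover have "card {a, b, c, d} = 4"
      using distinct_card[OF that(1)] by simp
    ultimately show False
      by (simp only: card_atLeastLessThan)
  qed
  then show ?thesis
    unfolding P4_free_edges_def mem_snd_D by blast
qed

lemma gen_ex_eqI:
  fixes G0 :: "nat graph"
  assumes upper:
      "\<And>G :: nat graph. is_graph G \<Longrightarrow> fst G = {0..<n} \<Longrightarrow> H_free F G \<Longrightarrow> count_sub H G \<le> k"
    and G0: "is_graph G0" "fst G0 = {0..<n}" "H_free F G0" "count_sub H G0 = k"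
  shows "gen_ex n H F = k"
  unfolding gen_ex_def
proof (rule Max_eqI)
  let ?counts = "{count_sub H G |G :: nat graph. is_graph G \<and> fst G = {0..<n} \<and> H_free F G}"
  show "finite ?counts"
    by (rule finite_subset[of _ "{..k}"]) (auto dest: upper)
  show "y \<le> k" if "y \<in> ?counts" for y
    using that upper by blast
  show "k \<in> ?counts"
    using G0 by blast
qed

lemma count_M2_le_of_P4_free:
  assumes "is_graph G" "H_free P4 G"
  shows "count_sub M2 G \<le> d3_matchings (card (fst G)) + (if card (fst G) = 4 then 1 else 0)"
  using P4_free_weighted_matching_bound[of G 0] assms
  by (simp add: count_sub_M2 H_free_P4_iff)

lemma count_sub_M2_D3: "count_sub M2 (D 3 n) = d3_matchings n"
  by (simp add: count_sub_M2 is_graph_D D3_counts)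

lemma H_free_P4_D3: "H_free P4 (D 3 n)"
  by (simp add: H_free_P4_iff is_graph_D P4_free_edges_D3)

lemma is_graph_M2: "is_graph M2"
  by (auto simp: M2_def is_graph_def)

lemma count_sub_M2_M2: "count_sub M2 M2 = 1"
proof -
  have "disjoint_edge_pairs (snd M2) = {snd M2}"
    unfolding M2_def by (simp add: disjoint_edge_pairs_doubleton)
  then show ?thesis
    by (simp add: count_sub_M2[OF is_graph_M2])
qed

lemma H_free_P4_M2: "H_free P4 M2"
  unfolding H_free_P4_iff[OF is_graph_M2] by (auto simp: P4_free_edges_def M2_def doubleton_eq_iff)

theorem proposition3p6:
  shows "(\<forall>n::nat. n > 0 \<and> n \<noteq> 4 \<longrightarrow> gen_ex n M2 P4 = count_sub M2 (D 3 n))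
         \<and> gen_ex 4 M2 P4 = 1"
proof (intro conjI allI impI)
  fix n :: nat
  assume "n > 0 \<and> n \<noteq> 4"
  then have "count_sub M2 G \<le> count_sub M2 (D 3 n)"
    if "is_graph G" "fst G = {0..<n}" "H_free P4 G" for G :: "nat graph"
    using count_M2_le_of_P4_free[OF that(1,3)] that(2) by (simp add: count_sub_M2_D3)
  then show "gen_ex n M2 P4 = count_sub M2 (D 3 n)"
    by (rule gen_ex_eqI[OF _ is_graph_D fst_D H_free_P4_D3 refl])
next
  have "d3_matchings 4 = 0"
    by (simp add: d3_matchings_def)
  then have "count_sub M2 G \<le> 1" if "is_graph G" "fst G = {0..<4}" "H_free P4 G" for G :: "nat graph"
    using count_M2_le_of_P4_free[OF that(1,3)] that(2) by simp
  moreover have "fst M2 = {0..<4}"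
    by (auto simp: M2_def)
  ultimately show "gen_ex 4 M2 P4 = 1"
    using gen_ex_eqI is_graph_M2 H_free_P4_M2 count_sub_M2_M2 by blast
qed

end
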